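(* Let $\alpha>0$, $K(x)=\exp(-x^\alpha)$ and, for $\sigma>0$, $K_\sigma(x)=K(x/\sigma)$. Let $\mathcal{X}=\{\mathbf{x}_1,\dots,\mathbf{x}_n\}\subset\mathbb{R}^d$ and suppose there is a partition of $\mathcal{X}$ into $\mathcal{C}_1,\dots,\mathcal{C}_k$ such that $\min_{l\in[k]}|\mathcal{C}_l|\ge2$ and $\min_{m\in[k]}d(\mathcal{C}_m,\mathcal{X}\setminus\mathcal{C}_m)^\alpha-3\max_{l\in[k]}\delta_l^\alpha=\delta>0$, where $\mathcal{C}_l$ is connected at distance $\delta_l$ for each $l\in[k]$. Let $\mathbf{U}$ have as columns the eigenvectors of the normalised Laplacian of the graph $(\mathcal{X},K_\sigma)$ with reflexive edges removed, and let $\mathbf{D}$ be the corresponding degree matrix. Then, for $0<\sigma<\delta^{1/\alpha}\log(13^8k^9n^z)^{-1/\alpha}$ with $z\ge10$, $$\max_{\substack{i,j,g,h\in[n],\,l,m\in[k]:\\ \mathbf{x}_i,\mathbf{x}_j\in\mathcal{C}_l,\\ \mathbf{x}_g\in\mathcal{C}_m,\ \mathbf{x}_h\notin\mathcal{C}_m}}\frac{\|\mathbf{D}_{ii}^{-1/2}\mathbf{U}_{i,1:k}-\mathbf{D}_{jj}^{-1/2}\mathbf{U}_{j,1:k}\|}{\|\mathbf{D}_{gg}^{-1/2}\mathbf{U}_{g,1:k}-\mathbf{D}_{hh}^{-1/2}\mathbf{U}_{h,1:k}\|}\le n^{(4-z)/2}.$$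
   Context: $[n]=\{1,\dots,n\}$; $\|\cdot\|$ is the Euclidean norm. For sets $S,U$, $d(S,U)=\inf_{\mathbf{x}\in S,\mathbf{y}\in U}\|\mathbf{x}-\mathbf{y}\|$. A set $S$ is connected at distance $\delta$ if there is no partition of $S$ into $S_1,S_2$ with $d(S_1,S_2)>\delta$. The graph with reflexive edges removed has affinity matrix $\mathbf{A}_0$ with $(\mathbf{A}_0)_{ij}=K_\sigma(\|\mathbf{x}_i-\mathbf{x}_j\|)$ for $i\ne j$ and $(\mathbf{A}_0)_{ii}=0$, degree matrix $\mathbf{D}=\mathrm{diag}(\sum_j(\mathbf{A}_0)_{ij})$, and normalised Laplacian $\mathbf{I}-\mathbf{D}^{-1/2}\mathbf{A}_0\mathbf{D}^{-1/2}$. "The eigenvectors" means an orthonormal eigenbasis arranged as columns with eigenvalues in nondecreasing order; $\mathbf{U}_{i,1:k}$ is the first $k$ entries of row $i$. *)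

theory Defs
  imports "HOL-Analysis.Analysis"
begin

definition K_sigma :: "real \<Rightarrow> real \<Rightarrow> real \<Rightarrow> real" where
  "K_sigma \<alpha> \<sigma> t = exp (- ((t / \<sigma>) powr \<alpha>))"

definition affinity :: "real \<Rightarrow> real \<Rightarrow> (nat \<Rightarrow> 'a::metric_space) \<Rightarrow> nat \<Rightarrow> nat \<Rightarrow> real" where
  "affinity \<alpha> \<sigma> x i j = (if i = j then 0 else K_sigma \<alpha> \<sigma> (dist (x i) (x j)))"

definition degree :: "real \<Rightarrow> real \<Rightarrow> (nat \<Rightarrow> 'a::metric_space) \<Rightarrow> nat \<Rightarrow> nat \<Rightarrow> real" where
  "degree \<alpha> \<sigma> x n i = (\<Sum>j<n. affinity \<alpha> \<sigma> x i j)"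

definition norm_laplacian :: "real \<Rightarrow> real \<Rightarrow> (nat \<Rightarrow> 'a::metric_space) \<Rightarrow> nat \<Rightarrow> nat \<Rightarrow> nat \<Rightarrow> real" where
  "norm_laplacian \<alpha> \<sigma> x n i j =
     (if i = j then 1 else 0)
     - affinity \<alpha> \<sigma> x i j / (sqrt (degree \<alpha> \<sigma> x n i) * sqrt (degree \<alpha> \<sigma> x n j))"

definition ordered_eigenbasis ::
  "nat \<Rightarrow> (nat \<Rightarrow> nat \<Rightarrow> real) \<Rightarrow> (nat \<Rightarrow> nat \<Rightarrow> real) \<Rightarrow> (nat \<Rightarrow> real) \<Rightarrow> bool" where
  "ordered_eigenbasis n L U lam \<longleftrightarrow>
     (\<forall>c<n. \<forall>c'<n. (\<Sum>i<n. U i c * U i c') = (if c = c' then 1 else 0)) \<and>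
     (\<forall>c<n. \<forall>i<n. (\<Sum>j<n. L i j * U j c) = lam c * U i c) \<and>
     (\<forall>c<n. \<forall>c'<n. c \<le> c' \<longrightarrow> lam c \<le> lam c')"

definition connected_at_distance :: "'a::metric_space set \<Rightarrow> real \<Rightarrow> bool" where
  "connected_at_distance S \<delta> \<longleftrightarrow>
     \<not> (\<exists>S1 S2. S1 \<noteq> {} \<and> S2 \<noteq> {} \<and> S1 \<union> S2 = S \<and> S1 \<inter> S2 = {} \<and> setdist S1 S2 > \<delta>)"

definition emb_dist :: "nat \<Rightarrow> (nat \<Rightarrow> real) \<Rightarrow> (nat \<Rightarrow> nat \<Rightarrow> real) \<Rightarrow> nat \<Rightarrow> nat \<Rightarrow> real" where
  "emb_dist k D U i j = sqrt (\<Sum>c<k. (U i c / sqrt (D i) - U j c / sqrt (D j))\<^sup>2)"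

end

(* Write f_c = D^(-1/2) U_c for the columns of the spectral embedding.  They are orthonormal
   for the D-weighted inner product, and f_c has Dirichlet energy
   (1/2) sum_ij A_ij (f_c(i) - f_c(j))^2 = lambda_c.  Inside a cluster any two points are joined
   by a chain of edges of weight at least w = exp(-max_l delta_l^alpha / sigma^alpha), which gives
   (f_c(i) - f_c(j))^2 <= 2 n lambda_c / w; edges leaving a cluster weigh at most
   eps = exp(-min_m d(C_m, X - C_m)^alpha / sigma^alpha) = eta w^3 with eta = exp(-delta / sigma^alpha).
   Expanding the normalised cluster indicators in the eigenbasis yields lambda_(k-1) <= k n eps / w
   and lambda_k >= w / (2 (k+1) n^3).  Hence the rows of a cluster lie within
   r = sqrt(2 k n lambda_(k-1) / w) = O(k n sqrt eta) of each other and of the cluster centroid,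
   while the difference of two normalised indicators has energy O(n^2 eps / w^2), so that by the
   spectral gap at least half of its mass lies on f_0, ..., f_(k-1); this puts distinct centroids
   at distance at least 1/(2n).  The choice of sigma makes 13^8 k^9 n^z eta < 1, which turns these
   two scales into the ratio n^((4-z)/2). *)

theory Submission
  imports Defs "Jordan_Normal_Form.Determinant" "HOL-Library.Transitive_Closure_Table"
begin

section \<open>Orthonormal eigenbases\<close>

lemma orthonormal_columns_imp_orthonormal_rows:
  fixes U :: "nat \<Rightarrow> nat \<Rightarrow> real"
  assumes "\<forall>c<n. \<forall>c'<n. (\<Sum>i<n. U i c * U i c') = (if c = c' then 1 else 0)"
    and "i < n" "j < n"
  shows "(\<Sum>c<n. U i c * U j c) = (if i = j then 1 else 0)"
proof -
  define M where "M = Matrix.mat n n (\<lambda>(i, c). U i c)"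
  have M: "M \<in> carrier_mat n n" unfolding M_def by simp
  have "transpose_mat M * M = 1\<^sub>m n"
    using assms(1) by (auto simp: M_def scalar_prod_def Matrix.mat_eq_iff atLeast0LessThan)
  then have "M * transpose_mat M = 1\<^sub>m n"
    using mat_mult_left_right_inverse[of "transpose_mat M" n M] M by auto
  then have "(M * transpose_mat M) $$ (i, j) = 1\<^sub>m n $$ (i, j)" by simp
  then show ?thesis using assms(2,3)
    by (simp add: M_def scalar_prod_def atLeast0LessThan)
qed

lemma orthonormal_expansion:
  fixes U :: "nat \<Rightarrow> nat \<Rightarrow> real" and y :: "nat \<Rightarrow> real"
  assumes ortho: "\<forall>c<n. \<forall>c'<n. (\<Sum>i<n. U i c * U i c') = (if c = c' then 1 else 0)"
    and j: "j < n"
  shows "(\<Sum>c<n. (\<Sum>i<n. y i * U i c) * U j c) = y j"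
proof -
  have "(\<Sum>c<n. (\<Sum>i<n. y i * U i c) * U j c) = (\<Sum>c<n. \<Sum>i<n. y i * (U i c * U j c))"
    by (simp add: sum_distrib_right mult.assoc)
  also have "\<dots> = (\<Sum>i<n. y i * (\<Sum>c<n. U i c * U j c))"
    by (subst sum.swap) (simp add: sum_distrib_left)
  also have "\<dots> = (\<Sum>i<n. if i = j then y i else 0)"
    using orthonormal_columns_imp_orthonormal_rows[OF ortho _ j] by (intro sum.cong refl) auto
  also have "\<dots> = y j" using j by simp
  finally show ?thesis .
qed

lemma orthonormal_parseval:
  fixes U :: "nat \<Rightarrow> nat \<Rightarrow> real" and y :: "nat \<Rightarrow> real"
  assumes ortho: "\<forall>c<n. \<forall>c'<n. (\<Sum>i<n. U i c * U i c') = (if c = c' then 1 else 0)"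
  shows "(\<Sum>c<n. (\<Sum>i<n. y i * U i c)\<^sup>2) = (\<Sum>i<n. (y i)\<^sup>2)"
proof -
  define a where "a c = (\<Sum>i<n. y i * U i c)" for c
  have "(\<Sum>c<n. (a c)\<^sup>2) = (\<Sum>c<n. \<Sum>j<n. y j * (a c * U j c))"
    by (simp add: a_def power2_eq_square sum_distrib_left sum_distrib_right mult_ac)
  also have "\<dots> = (\<Sum>j<n. y j * (\<Sum>c<n. a c * U j c))"
    by (subst sum.swap) (simp add: sum_distrib_left)
  also have "\<dots> = (\<Sum>j<n. (y j)\<^sup>2)"
    using orthonormal_expansion[OF ortho] by (intro sum.cong refl) (auto simp: a_def power2_eq_square)
  finally show ?thesis by (simp add: a_def)
qed

lemma eigenbasis_quadratic_form:
  fixes U L :: "nat \<Rightarrow> nat \<Rightarrow> real" and lam y :: "nat \<Rightarrow> real"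
  assumes ortho: "\<forall>c<n. \<forall>c'<n. (\<Sum>i<n. U i c * U i c') = (if c = c' then 1 else 0)"
    and eigen: "\<forall>c<n. \<forall>i<n. (\<Sum>j<n. L i j * U j c) = lam c * U i c"
  shows "(\<Sum>c<n. lam c * (\<Sum>i<n. y i * U i c)\<^sup>2) = (\<Sum>i<n. \<Sum>j<n. y i * L i j * y j)"
proof -
  define a where "a c = (\<Sum>i<n. y i * U i c)" for c
  have y_eq: "(\<Sum>c<n. a c * U j c) = y j" if "j < n" for j
    using orthonormal_expansion[OF ortho that] by (simp add: a_def)
  have L_y: "(\<Sum>j<n. L i j * y j) = (\<Sum>c<n. a c * lam c * U i c)" if i: "i < n" for i
  proof -
    have "(\<Sum>j<n. L i j * y j) = (\<Sum>j<n. L i j * (\<Sum>c<n. a c * U j c))"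
      using y_eq by (intro sum.cong refl) auto
    also have "\<dots> = (\<Sum>j<n. \<Sum>c<n. a c * (L i j * U j c))"
      by (simp add: sum_distrib_left mult_ac)
    also have "\<dots> = (\<Sum>c<n. a c * (\<Sum>j<n. L i j * U j c))"
      by (subst sum.swap) (simp add: sum_distrib_left)
    also have "\<dots> = (\<Sum>c<n. a c * lam c * U i c)"
      using eigen i by (intro sum.cong refl) auto
    finally show ?thesis .
  qed
  have "(\<Sum>i<n. \<Sum>j<n. y i * L i j * y j) = (\<Sum>i<n. y i * (\<Sum>j<n. L i j * y j))"
    by (simp add: sum_distrib_left mult.assoc)
  also have "\<dots> = (\<Sum>i<n. y i * (\<Sum>c<n. a c * lam c * U i c))"
    using L_y by (intro sum.cong refl) auto
  also have "\<dots> = (\<Sum>c<n. \<Sum>i<n. a c * lam c * (y i * U i c))"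
    by (subst sum.swap) (simp add: sum_distrib_left mult_ac)
  also have "\<dots> = (\<Sum>c<n. lam c * (a c)\<^sup>2)"
    by (simp add: a_def power2_eq_square sum_distrib_left mult_ac)
  finally show ?thesis by (simp add: a_def)
qed

lemma normalized_laplacian_quadratic_form:
  fixes A :: "nat \<Rightarrow> nat \<Rightarrow> real" and D \<phi> :: "nat \<Rightarrow> real"
  assumes sym: "\<And>i j. i < n \<Longrightarrow> j < n \<Longrightarrow> A i j = A j i"
    and D_eq: "\<And>i. i < n \<Longrightarrow> D i = (\<Sum>j<n. A i j)"
    and D_pos: "\<And>i. i < n \<Longrightarrow> 0 < D i"
  shows "(\<Sum>i<n. \<Sum>j<n. (sqrt (D i) * \<phi> i) * ((if i = j then 1 else 0) - A i j / (sqrt (D i) * sqrt (D j)))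
            * (sqrt (D j) * \<phi> j))
       = (\<Sum>i<n. \<Sum>j<n. A i j * (\<phi> i - \<phi> j)\<^sup>2) / 2"
proof -
  have entry: "(sqrt (D i) * \<phi> i) * ((if i = j then 1 else 0) - A i j / (sqrt (D i) * sqrt (D j)))
        * (sqrt (D j) * \<phi> j) = (if i = j then D i * (\<phi> i)\<^sup>2 else 0) - A i j * \<phi> i * \<phi> j"
    if "i < n" "j < n" for i j
    using D_pos[OF that(1)] D_pos[OF that(2)]
    by (auto simp: field_simps power2_eq_square real_sqrt_mult[symmetric])
  have diag: "(\<Sum>i<n. \<Sum>j<n. if i = j then D i * (\<phi> i)\<^sup>2 else 0) = (\<Sum>i<n. \<Sum>j<n. A i j * (\<phi> i)\<^sup>2)"
    using D_eq by (simp add: sum_distrib_right)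
  have swap: "(\<Sum>i<n. \<Sum>j<n. A i j * (\<phi> j)\<^sup>2) = (\<Sum>i<n. \<Sum>j<n. A i j * (\<phi> i)\<^sup>2)"
    by (subst sum.swap) (use sym in \<open>auto intro!: sum.cong\<close>)
  have "(\<Sum>i<n. \<Sum>j<n. (sqrt (D i) * \<phi> i) * ((if i = j then 1 else 0) - A i j / (sqrt (D i) * sqrt (D j)))
            * (sqrt (D j) * \<phi> j))
      = (\<Sum>i<n. \<Sum>j<n. (if i = j then D i * (\<phi> i)\<^sup>2 else 0) - A i j * \<phi> i * \<phi> j)"
    using entry by (intro sum.cong refl) auto
  also have "\<dots> = (\<Sum>i<n. \<Sum>j<n. A i j * (\<phi> i)\<^sup>2) - (\<Sum>i<n. \<Sum>j<n. A i j * \<phi> i * \<phi> j)"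
    unfolding diag[symmetric] by (simp add: sum_subtractf)
  moreover have "(\<Sum>i<n. \<Sum>j<n. A i j * (\<phi> i - \<phi> j)\<^sup>2)
      = (\<Sum>i<n. \<Sum>j<n. A i j * (\<phi> i)\<^sup>2) + (\<Sum>i<n. \<Sum>j<n. A i j * (\<phi> j)\<^sup>2)
        - 2 * (\<Sum>i<n. \<Sum>j<n. A i j * \<phi> i * \<phi> j)"
    by (simp add: power2_diff algebra_simps sum.distrib sum_subtractf sum_distrib_left)
  ultimately show ?thesis unfolding swap by simp
qed

lemma weighted_variance_le:
  fixes D h :: "'a \<Rightarrow> real"
  shows "(\<Sum>i\<in>I. D i) * (\<Sum>i\<in>I. D i * (h i)\<^sup>2) - (\<Sum>i\<in>I. D i * h i)\<^sup>2
       \<le> (\<Sum>i\<in>I. D i) * (\<Sum>i\<in>I. D i * (h i - a)\<^sup>2)"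
proof -
  define V S Q where "V = (\<Sum>i\<in>I. D i)" and "S = (\<Sum>i\<in>I. D i * h i)" and "Q = (\<Sum>i\<in>I. D i * (h i)\<^sup>2)"
  have "(\<Sum>i\<in>I. D i * (h i - a)\<^sup>2) = (\<Sum>i\<in>I. D i * (h i)\<^sup>2 - 2 * a * (D i * h i) + a\<^sup>2 * D i)"
    by (intro sum.cong refl) (simp add: power2_diff algebra_simps)
  also have "\<dots> = Q - 2 * a * S + a\<^sup>2 * V"
    unfolding V_def S_def Q_def by (simp add: sum.distrib sum_subtractf sum_distrib_left)
  finally have "(\<Sum>i\<in>I. D i * (h i - a)\<^sup>2) = Q - 2 * a * S + a\<^sup>2 * V" .
  moreover have "V * Q - S\<^sup>2 \<le> V * (Q - 2 * a * S + a\<^sup>2 * V)"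
    using zero_le_power2[of "S - a * V"] by (simp add: power2_eq_square algebra_simps)
  ultimately show ?thesis unfolding V_def S_def Q_def by simp
qed

lemma weighted_cauchy_schwarz:
  fixes D h :: "'a \<Rightarrow> real"
  assumes "\<And>i. i \<in> I \<Longrightarrow> 0 \<le> D i"
  shows "(\<Sum>i\<in>I. D i * h i)\<^sup>2 \<le> (\<Sum>i\<in>I. D i) * (\<Sum>i\<in>I. D i * (h i)\<^sup>2)"
  using Cauchy_Schwarz_ineq_sum[of "\<lambda>i. sqrt (D i)" "\<lambda>i. sqrt (D i) * h i" I] assms
  by (simp add: power_mult_distrib mult.assoc[symmetric] cong: sum.cong)

lemma weighted_sq_add_le:
  fixes u v w \<rho> R L :: real
  assumes "0 < L" "0 < w" "w * u\<^sup>2 \<le> \<rho>" "w * v\<^sup>2 \<le> L * R"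
  shows "w * (u + v)\<^sup>2 \<le> (L + 1) * (\<rho> + R)"
proof -
  have "L * (u + v)\<^sup>2 \<le> L * (L + 1) * u\<^sup>2 + (L + 1) * v\<^sup>2"
    using zero_le_power2[of "L * u - v"] by (simp add: power2_eq_square algebra_simps)
  then have "L * (w * (u + v)\<^sup>2) \<le> w * (L * (L + 1) * u\<^sup>2 + (L + 1) * v\<^sup>2)"
    using assms(2) by (simp add: mult.left_commute)
  also have "\<dots> = L * (L + 1) * (w * u\<^sup>2) + (L + 1) * (w * v\<^sup>2)" by (simp add: algebra_simps)
  also have "\<dots> \<le> L * (L + 1) * \<rho> + (L + 1) * (L * R)"
    using assms by (intro add_mono mult_left_mono) auto
  also have "\<dots> = L * ((L + 1) * (\<rho> + R))" by (simp add: algebra_simps)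
  finally show ?thesis using assms(1) by simp
qed

lemma rtrancl_path_set_subset:
  assumes "rtrancl_path r a xs b" "\<And>p q. r p q \<Longrightarrow> q \<in> S"
  shows "set xs \<subseteq> S"
  using assms by (induction rule: rtrancl_path.induct) auto

lemma rtrancl_path_sq_diff_le:
  fixes A :: "nat \<Rightarrow> nat \<Rightarrow> real" and f :: "nat \<Rightarrow> real"
  assumes "rtrancl_path r a xs b" "distinct (a # xs)"
    and edge: "\<And>p q. r p q \<Longrightarrow> p < n \<and> q < n \<and> w \<le> A p q"
    and A_nonneg: "\<And>p q. p < n \<Longrightarrow> q < n \<Longrightarrow> 0 \<le> A p q"
    and w: "0 < w"
  shows "w * (f a - f b)\<^sup>2 \<le> length xs * (\<Sum>i\<in>set (a # xs). \<Sum>j<n. A i j * (f i - f j)\<^sup>2)"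
  using assms(1,2)
proof (induction rule: rtrancl_path.induct)
  case (base x)
  then show ?case by simp
next
  case (step x y ys z)
  define \<rho> where "\<rho> = (\<Sum>j<n. A x j * (f x - f j)\<^sup>2)"
  define R where "R = (\<Sum>i\<in>set (y # ys). \<Sum>j<n. A i j * (f i - f j)\<^sup>2)"
  have xy: "x < n" "y < n" "w \<le> A x y" using edge[OF step.hyps(1)] by auto
  have IH: "w * (f y - f z)\<^sup>2 \<le> length ys * R"
    using step.IH step.prems unfolding R_def by auto
  have "w * (f x - f y)\<^sup>2 \<le> A x y * (f x - f y)\<^sup>2"
    using xy by (intro mult_right_mono) auto
  also have "\<dots> \<le> \<rho>"
    unfolding \<rho>_def using xy A_nonneg by (intro member_le_sum) auto
  finally have first: "w * (f x - f y)\<^sup>2 \<le> \<rho>" .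
  have "set (y # ys) \<subseteq> {..<n}"
    using rtrancl_path_set_subset[OF step.hyps(2), of "{..<n}"] edge xy by auto
  then have R_nonneg: "0 \<le> R"
    unfolding R_def by (intro sum_nonneg) (auto simp: A_nonneg)
  have "(\<Sum>i\<in>set (x # y # ys). \<Sum>j<n. A i j * (f i - f j)\<^sup>2) = \<rho> + R"
    unfolding \<rho>_def R_def using step.prems by (subst set_simps(2), subst sum.insert) auto
  moreover have "w * (f x - f z)\<^sup>2 \<le> (length ys + 1) * (\<rho> + R)"
  proof (cases ys)
    case Nil
    then have "y = z" using step.hyps(2) by (auto elim: rtrancl_path.cases)
    then show ?thesis using first R_nonneg Nil by simp
  next
    case Cons
    then have "w * ((f x - f y) + (f y - f z))\<^sup>2 \<le> (length ys + 1) * (\<rho> + R)"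
      using weighted_sq_add_le[OF _ w first IH] by simp
    then show ?thesis by simp
  qed
  ultimately show ?case by simp
qed

lemma setdist_attained_finite:
  fixes S T :: "'a::metric_space set"
  assumes "finite S" "finite T" "S \<noteq> {}" "T \<noteq> {}"
  obtains x y where "x \<in> S" "y \<in> T" "dist x y = setdist S T"
proof -
  define f where "f = (\<lambda>(x :: 'a, y). dist x y)"
  have fin: "finite (S \<times> T)" "S \<times> T \<noteq> {}" using assms by auto
  obtain x y where m: "arg_min_on f (S \<times> T) = (x, y)" by fastforce
  have xy: "x \<in> S" "y \<in> T" using arg_min_if_finite(1)[OF fin, of f] m by auto
  have least: "dist x y \<le> dist x' y'" if "x' \<in> S" "y' \<in> T" for x' y'
    using arg_min_least[OF fin, of "(x', y')" f] m that by (auto simp: f_def)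
  have "dist x y = setdist S T"
    using assms(3,4) xy least by (intro antisym le_setdistI setdist_le_dist) auto
  then show ?thesis using that xy by blast
qed

lemma connected_at_distance_chain:
  fixes p :: "'i \<Rightarrow> 'a::metric_space"
  assumes fin: "finite J" and inj: "inj_on p J"
    and conn: "connected_at_distance (p ` J) \<delta>" and i: "i \<in> J" and j: "j \<in> J"
  shows "(\<lambda>a b. a \<in> J \<and> b \<in> J \<and> a \<noteq> b \<and> dist (p a) (p b) \<le> \<delta>)\<^sup>*\<^sup>* i j"
proof -
  define E where "E = (\<lambda>a b. a \<in> J \<and> b \<in> J \<and> a \<noteq> b \<and> dist (p a) (p b) \<le> \<delta>)"
  define R where "R = {b \<in> J. E\<^sup>*\<^sup>* i b}"
  have RJ: "R \<subseteq> J" unfolding R_def by blast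
  have "J \<subseteq> R"
  proof (rule ccontr)
    assume "\<not> J \<subseteq> R"
    moreover have "i \<in> R" unfolding R_def using i by simp
    ultimately have ne: "p ` R \<noteq> {}" "p ` (J - R) \<noteq> {}" by blast+
    have cover: "p ` R \<union> p ` (J - R) = p ` J"
      unfolding image_Un[symmetric] Un_Diff_cancel using RJ by (simp add: Un_absorb1)
    have disj: "p ` R \<inter> p ` (J - R) = {}"
      by (metis Diff_disjoint image_empty inj_on_image_Int[OF inj RJ Diff_subset])
    have far: "\<not> \<delta> < setdist (p ` R) (p ` (J - R))"
    proof
      assume sep: "\<delta> < setdist (p ` R) (p ` (J - R))"
      have "\<exists>S1 S2. S1 \<noteq> {} \<and> S2 \<noteq> {} \<and> S1 \<union> S2 = p ` J \<and> S1 \<inter> S2 = {} \<and> \<delta> < setdist S1 S2"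
        using ne cover disj sep by (intro exI[of _ "p ` R"] exI[of _ "p ` (J - R)"]) simp
      with conn show False unfolding connected_at_distance_def by (rule notE)
    qed
    have "finite (p ` R)" "finite (p ` (J - R))" using fin RJ finite_subset by blast+
    then obtain a b where ab: "a \<in> R" "b \<in> J - R"
        and "dist (p a) (p b) = setdist (p ` R) (p ` (J - R))"
      using setdist_attained_finite[OF _ _ ne] by blast
    then have "E a b" using far RJ unfolding E_def by auto
    moreover have "E\<^sup>*\<^sup>* i a" using ab(1) unfolding R_def by blast
    ultimately have "b \<in> R" using ab(2) unfolding R_def by (blast intro: rtranclp.rtrancl_into_rtrancl)
    then show False using ab(2) by blast
  qed
  then show ?thesis using j unfolding R_def E_def by blast
qed

section \<open>Spectral embedding of a weighted graph\<close>

locale weighted_graph =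
  fixes n :: nat and A :: "nat \<Rightarrow> nat \<Rightarrow> real" and D :: "nat \<Rightarrow> real"
  assumes A_sym: "i < n \<Longrightarrow> j < n \<Longrightarrow> A i j = A j i"
    and A_nonneg: "i < n \<Longrightarrow> j < n \<Longrightarrow> 0 \<le> A i j"
    and D_eq: "i < n \<Longrightarrow> D i = (\<Sum>j<n. A i j)"
begin

definition dirichlet :: "(nat \<Rightarrow> real) \<Rightarrow> real" where
  "dirichlet \<phi> = (\<Sum>i<n. \<Sum>j<n. A i j * (\<phi> i - \<phi> j)\<^sup>2) / 2"

lemma D_nonneg:
  assumes "i < n" shows "0 \<le> D i"
  unfolding D_eq[OF assms] using assms by (intro sum_nonneg) (simp add: A_nonneg)

lemma dirichlet_nonneg: "0 \<le> dirichlet \<phi>"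
  unfolding dirichlet_def by (auto intro!: sum_nonneg simp: A_nonneg)

lemma heavy_path_sq_diff_le:
  assumes path: "(\<lambda>a b. a < n \<and> b < n \<and> w \<le> A a b)\<^sup>*\<^sup>* i j" and i: "i < n" and w: "0 < w"
  shows "w * (\<phi> i - \<phi> j)\<^sup>2 \<le> 2 * n * dirichlet \<phi>"
proof -
  define E where "E = (\<lambda>a b. a < n \<and> b < n \<and> w \<le> A a b)"
  obtain xs where "rtrancl_path E i xs j"
    using path unfolding E_def rtranclp_eq_rtrancl_path by blast
  then obtain ys where ys: "rtrancl_path E i ys j" and dist: "distinct (i # ys)"
    by (rule rtrancl_path_distinct)
  have sub: "set (i # ys) \<subseteq> {..<n}"
    using rtrancl_path_set_subset[OF ys, of "{..<n}"] i unfolding E_def by auto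
  have "length ys < length (i # ys)" by simp
  also have "\<dots> = card (set (i # ys))" using dist by (simp add: distinct_card)
  also have "\<dots> \<le> n" using card_mono[OF _ sub] by simp
  finally have len: "length ys \<le> n" by simp
  have "w * (\<phi> i - \<phi> j)\<^sup>2 \<le> length ys * (\<Sum>a\<in>set (i # ys). \<Sum>b<n. A a b * (\<phi> a - \<phi> b)\<^sup>2)"
    by (rule rtrancl_path_sq_diff_le[OF ys dist]) (auto simp: E_def A_nonneg w)
  also have "\<dots> \<le> n * (\<Sum>a<n. \<Sum>b<n. A a b * (\<phi> a - \<phi> b)\<^sup>2)"
    using sub len by (intro mult_mono sum_mono2) (auto intro!: sum_nonneg simp: A_nonneg)
  also have "\<dots> = 2 * n * dirichlet \<phi>" unfolding dirichlet_def by simp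
  finally show ?thesis .
qed

end

locale laplacian_eigenbasis = weighted_graph +
  fixes U :: "nat \<Rightarrow> nat \<Rightarrow> real" and lam :: "nat \<Rightarrow> real"
  assumes D_pos: "i < n \<Longrightarrow> 0 < D i"
    and eigenbasis: "ordered_eigenbasis n
          (\<lambda>i j. (if i = j then 1 else 0) - A i j / (sqrt (D i) * sqrt (D j))) U lam"
begin

text \<open>\<open>emb c\<close> is the column \<open>D^(-1/2) U_c\<close>, so that \<open>emb_dist k D U i j\<close> compares the vectors
  \<open>(emb c i)_(c<k)\<close> and \<open>(emb c j)_(c<k)\<close>; \<open>coeff \<phi> c\<close> is the coefficient of \<open>\<phi>\<close> on \<open>emb c\<close>
  for the inner product weighted by \<open>D\<close>.\<close>

definition emb :: "nat \<Rightarrow> nat \<Rightarrow> real" where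
  "emb c i = U i c / sqrt (D i)"

definition coeff :: "(nat \<Rightarrow> real) \<Rightarrow> nat \<Rightarrow> real" where
  "coeff \<phi> c = (\<Sum>i<n. D i * \<phi> i * emb c i)"

lemma U_orthonormal: "\<forall>c<n. \<forall>c'<n. (\<Sum>i<n. U i c * U i c') = (if c = c' then 1 else 0)"
  using eigenbasis unfolding ordered_eigenbasis_def by blast

lemma U_eigen: "\<forall>c<n. \<forall>i<n. (\<Sum>j<n. ((if i = j then 1 else 0) - A i j / (sqrt (D i) * sqrt (D j))) * U j c)
    = lam c * U i c"
  using eigenbasis unfolding ordered_eigenbasis_def by blast

lemma lam_mono: "c \<le> c' \<Longrightarrow> c' < n \<Longrightarrow> lam c \<le> lam c'"
  using eigenbasis unfolding ordered_eigenbasis_def by auto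

lemma sqrt_D_emb: "i < n \<Longrightarrow> sqrt (D i) * emb c i = U i c"
  unfolding emb_def using D_pos[of i] by simp

lemma D_emb: "i < n \<Longrightarrow> D i * emb c i = sqrt (D i) * U i c"
  unfolding emb_def using D_pos[of i] by (simp add: field_simps)

lemma coeff_eq: "coeff \<phi> c = (\<Sum>i<n. (sqrt (D i) * \<phi> i) * U i c)"
  unfolding coeff_def
proof (intro sum.cong refl)
  fix i assume "i \<in> {..<n}"
  then show "D i * \<phi> i * emb c i = sqrt (D i) * \<phi> i * U i c"
    using D_emb[of i c] by (simp add: algebra_simps)
qed

lemma coeff_parseval: "(\<Sum>c<n. (coeff \<phi> c)\<^sup>2) = (\<Sum>i<n. D i * (\<phi> i)\<^sup>2)"
  unfolding coeff_eq orthonormal_parseval[OF U_orthonormal]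
  by (intro sum.cong refl) (simp add: power_mult_distrib D_nonneg)

lemma coeff_rayleigh: "(\<Sum>c<n. lam c * (coeff \<phi> c)\<^sup>2) = dirichlet \<phi>"
  unfolding coeff_eq eigenbasis_quadratic_form[OF U_orthonormal U_eigen] dirichlet_def
  by (rule normalized_laplacian_quadratic_form[OF A_sym D_eq D_pos])

lemma coeff_emb:
  assumes "c < n" "c' < n"
  shows "coeff (emb c) c' = (if c = c' then 1 else 0)"
proof -
  have "D i * emb c i * emb c' i = U i c * U i c'" if i: "i < n" for i
  proof -
    have "D i * emb c i * emb c' i = sqrt (D i) * U i c * emb c' i" by (simp only: D_emb[OF i])
    also have "\<dots> = U i c * (sqrt (D i) * emb c' i)" by (simp only: mult_ac)
    finally show ?thesis by (simp only: sqrt_D_emb[OF i])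
  qed
  then have "coeff (emb c) c' = (\<Sum>i<n. U i c * U i c')"
    unfolding coeff_def by (intro sum.cong refl) auto
  then show ?thesis using U_orthonormal assms by simp
qed

lemma sum_delta_coeff_emb:
  assumes c: "c < n"
  shows "(\<Sum>c'<n. g c' * (coeff (emb c) c')\<^sup>2) = g c"
proof -
  have "(\<Sum>c'<n. g c' * (coeff (emb c) c')\<^sup>2) = (\<Sum>c'<n. if c = c' then g c else 0)"
    by (intro sum.cong refl) (simp add: coeff_emb c)
  also have "\<dots> = g c" using c by simp
  finally show ?thesis .
qed

lemma dirichlet_emb: "c < n \<Longrightarrow> dirichlet (emb c) = lam c"
  using sum_delta_coeff_emb[of c lam] by (simp add: coeff_rayleigh)

lemma emb_normalized: "c < n \<Longrightarrow> (\<Sum>i<n. D i * (emb c i)\<^sup>2) = 1"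
  using sum_delta_coeff_emb[of c "\<lambda>_. 1"] by (simp add: coeff_parseval)

lemma lam_nonneg: "c < n \<Longrightarrow> 0 \<le> lam c"
  using dirichlet_emb dirichlet_nonneg by metis

lemma lam_tail_le_dirichlet: "lam j * (\<Sum>c\<in>{j..<n}. (coeff \<phi> c)\<^sup>2) \<le> dirichlet \<phi>"
proof -
  have "lam j * (\<Sum>c\<in>{j..<n}. (coeff \<phi> c)\<^sup>2) \<le> (\<Sum>c\<in>{j..<n}. lam c * (coeff \<phi> c)\<^sup>2)"
    unfolding sum_distrib_left by (intro sum_mono mult_right_mono lam_mono) auto
  also have "\<dots> \<le> (\<Sum>c<n. lam c * (coeff \<phi> c)\<^sup>2)"
    by (intro sum_mono2) (auto simp: lam_nonneg)
  finally show ?thesis by (simp add: coeff_rayleigh)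
qed

lemma emb_diff_sq_le:
  assumes "(\<lambda>a b. a < n \<and> b < n \<and> w \<le> A a b)\<^sup>*\<^sup>* i j" "i < n" "0 < w" and c: "c < n"
  shows "w * (emb c i - emb c j)\<^sup>2 \<le> 2 * n * lam c"
  using heavy_path_sq_diff_le[OF assms(1-3), of "emb c"] dirichlet_emb[OF c] by simp

end

section \<open>Graphs with well-separated clusters\<close>

locale clustered_graph = weighted_graph +
  fixes k :: nat and I :: "nat \<Rightarrow> nat set" and w eps :: real
  assumes k_pos: "1 \<le> k"
    and clusters_disjoint: "l < k \<Longrightarrow> m < k \<Longrightarrow> l \<noteq> m \<Longrightarrow> I l \<inter> I m = {}"
    and clusters_cover: "(\<Union>l<k. I l) = {..<n}"
    and card_cluster: "l < k \<Longrightarrow> 2 \<le> card (I l)"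
    and cluster_connected:
      "l < k \<Longrightarrow> i \<in> I l \<Longrightarrow> j \<in> I l \<Longrightarrow> (\<lambda>a b. a < n \<and> b < n \<and> w \<le> A a b)\<^sup>*\<^sup>* i j"
    and cross_weight_le: "l < k \<Longrightarrow> i \<in> I l \<Longrightarrow> j < n \<Longrightarrow> j \<notin> I l \<Longrightarrow> A i j \<le> eps"
    and A_le_1: "i < n \<Longrightarrow> j < n \<Longrightarrow> A i j \<le> 1"
    and w_pos: "0 < w"
    and eps_nonneg: "0 \<le> eps"
begin

lemma cluster_subset: "l < k \<Longrightarrow> I l \<subseteq> {..<n}"
  using clusters_cover by blast

lemma finite_cluster: "l < k \<Longrightarrow> finite (I l)"
  using cluster_subset finite_subset by blast

lemma cluster_exists: "i < n \<Longrightarrow> \<exists>l<k. i \<in> I l"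
  using clusters_cover by blast

lemma cluster_unique: "l < k \<Longrightarrow> m < k \<Longrightarrow> i \<in> I l \<Longrightarrow> i \<in> I m \<Longrightarrow> l = m"
  using clusters_disjoint by blast

lemma sum_over_clusters: "(\<Sum>i<n. g i) = (\<Sum>l<k. \<Sum>i\<in>I l. g i)"
proof -
  have "(\<Sum>i<n. g i) = sum g (\<Union>l<k. I l)" by (simp add: clusters_cover)
  also have "\<dots> = (\<Sum>l<k. sum g (I l))"
    by (rule sum.UNION_disjoint) (auto simp: finite_cluster clusters_disjoint)
  finally show ?thesis .
qed

lemma two_k_le_n: "2 * k \<le> n"
proof -
  have "2 * k = (\<Sum>l<k. 2)" by simp
  also have "\<dots> \<le> (\<Sum>l<k. card (I l))" by (intro sum_mono) (simp add: card_cluster)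
  also have "\<dots> = (\<Sum>i<n. (1::nat))" using sum_over_clusters[of "\<lambda>_. 1::nat"] by simp
  finally show ?thesis by simp
qed

lemma k_less_n: "k < n"
  using two_k_le_n k_pos by simp

lemma D_le_n: "i < n \<Longrightarrow> D i \<le> n"
proof -
  assume i: "i < n"
  have "D i \<le> (\<Sum>j<n. 1)" unfolding D_eq[OF i] by (intro sum_mono) (simp add: A_le_1 i)
  then show ?thesis by simp
qed

lemma sum_D_le: "(\<Sum>i<n. D i) \<le> (real n)\<^sup>2"
proof -
  have "(\<Sum>i<n. D i) \<le> (\<Sum>i<n. real n)" by (intro sum_mono) (simp add: D_le_n)
  then show ?thesis by (simp add: power2_eq_square)
qed

text \<open>Every vertex has a heavy edge: the first step of a chain to another point of its cluster.\<close>
lemma w_le_D: "i < n \<Longrightarrow> w \<le> D i"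
proof -
  assume i: "i < n"
  obtain l where l: "l < k" "i \<in> I l" using cluster_exists[OF i] by blast
  have "\<not> I l \<subseteq> {i}"
  proof
    assume "I l \<subseteq> {i}"
    then have "card (I l) \<le> card {i}" by (intro card_mono) auto
    then show False using card_cluster[OF l(1)] by simp
  qed
  then obtain j where j: "j \<in> I l" "j \<noteq> i" by blast
  have "(\<lambda>a b. a < n \<and> b < n \<and> w \<le> A a b)\<^sup>*\<^sup>* i j" by (rule cluster_connected[OF l(1) l(2) j(1)])
  then obtain y where y: "y < n" "w \<le> A i y" using j(2) by (auto elim: converse_rtranclpE)
  have "A i y \<le> D i"
    unfolding D_eq[OF i] using y(1) i by (intro member_le_sum) (auto simp: A_nonneg)
  then show ?thesis using y(2) by linarith
qed

end

locale clustered_eigenbasis = clustered_graph +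
  fixes U :: "nat \<Rightarrow> nat \<Rightarrow> real" and lam :: "nat \<Rightarrow> real"
  assumes U_eigenbasis: "ordered_eigenbasis n
          (\<lambda>i j. (if i = j then 1 else 0) - A i j / (sqrt (D i) * sqrt (D j))) U lam"

sublocale clustered_eigenbasis \<subseteq> laplacian_eigenbasis n A D U lam
  by unfold_locales (use less_le_trans[OF w_pos w_le_D] U_eigenbasis in auto)

context clustered_eigenbasis
begin

definition vol :: "nat \<Rightarrow> real" where
  "vol l = (\<Sum>i\<in>I l. D i)"

text \<open>The normalised indicator of \<open>I l\<close> has unit \<open>D\<close>-norm; \<open>cluster_weight l c\<close> is the share of
  eigenvector \<open>c\<close> in it.\<close>

definition cluster_weight :: "nat \<Rightarrow> nat \<Rightarrow> real" where
  "cluster_weight l c = (coeff (indicator (I l)) c)\<^sup>2 / vol l"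

definition centroid :: "nat \<Rightarrow> nat \<Rightarrow> real" where
  "centroid l c = coeff (indicator (I l)) c / vol l"

lemma sum_indicator_cluster:
  fixes g :: "nat \<Rightarrow> real"
  assumes l: "l < k"
  shows "(\<Sum>i<n. indicator (I l) i * g i) = (\<Sum>i\<in>I l. g i)"
proof -
  have "(\<Sum>i<n. indicator (I l) i * g i) = (\<Sum>i<n. if i \<in> I l then g i else 0)"
    by (intro sum.cong) (auto simp: indicator_def)
  also have "\<dots> = sum g ({..<n} \<inter> I l)" by (simp add: sum.inter_restrict)
  also have "{..<n} \<inter> I l = I l" using cluster_subset[OF l] by (rule Int_absorb1)
  finally show ?thesis .
qed

lemma coeff_indicator: "l < k \<Longrightarrow> coeff (indicator (I l)) c = (\<Sum>i\<in>I l. D i * emb c i)"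
  unfolding coeff_def using sum_indicator_cluster[of l "\<lambda>i. D i * emb c i"] by (simp add: mult_ac)

lemma card_mult_w_le_vol: "l < k \<Longrightarrow> card (I l) * w \<le> vol l"
proof -
  assume l: "l < k"
  have "(\<Sum>i\<in>I l. w) \<le> vol l"
    unfolding vol_def using cluster_subset[OF l] by (intro sum_mono) (auto intro: w_le_D)
  then show ?thesis by simp
qed

lemma two_w_le_vol: "l < k \<Longrightarrow> 2 * w \<le> vol l"
proof -
  assume l: "l < k"
  have "2 * w \<le> card (I l) * w"
    using card_cluster[OF l] w_pos by (intro mult_right_mono) auto
  then show ?thesis using card_mult_w_le_vol[OF l] by linarith
qed

lemma vol_pos: "l < k \<Longrightarrow> 0 < vol l"
  using two_w_le_vol[of l] w_pos by linarith

lemma vol_le: "l < k \<Longrightarrow> vol l \<le> (real n)\<^sup>2"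
proof -
  assume l: "l < k"
  have "vol l \<le> (\<Sum>i<n. D i)"
    unfolding vol_def using cluster_subset[OF l] by (intro sum_mono2) (auto simp: D_nonneg)
  then show ?thesis using sum_D_le by linarith
qed

lemma sum_vol: "(\<Sum>l<k. vol l) = (\<Sum>i<n. D i)"
  unfolding vol_def by (rule sum_over_clusters[symmetric])

lemma cluster_weight_nonneg: "l < k \<Longrightarrow> 0 \<le> cluster_weight l c"
  unfolding cluster_weight_def using vol_pos[of l] by simp

lemma cluster_weight_sum: "l < k \<Longrightarrow> (\<Sum>c<n. cluster_weight l c) = 1"
proof -
  assume l: "l < k"
  have "(\<Sum>c<n. (coeff (indicator (I l)) c)\<^sup>2) = (\<Sum>i<n. indicator (I l) i * D i)"
    unfolding coeff_parseval by (intro sum.cong) (auto simp: indicator_def)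
  also have "\<dots> = vol l" unfolding vol_def by (rule sum_indicator_cluster[OF l])
  finally show ?thesis
    unfolding cluster_weight_def using vol_pos[OF l] by (simp add: sum_divide_distrib[symmetric])
qed

text \<open>A cluster indicator only pays for the light edges leaving the cluster.\<close>
lemma dirichlet_indicator_le: "l < k \<Longrightarrow> dirichlet (indicator (I l)) \<le> n * card (I l) * eps"
proof -
  assume l: "l < k"
  define ind where "ind = (indicator (I l) :: nat \<Rightarrow> real)"
  have edge_term: "A i j * (ind i - ind j)\<^sup>2 \<le> eps * (ind i + ind j)" if "i < n" "j < n" for i j
    using cross_weight_le[OF l, of i j] cross_weight_le[OF l, of j i] A_sym[OF that] eps_nonneg that
    by (cases "i \<in> I l"; cases "j \<in> I l") (auto simp: ind_def indicator_def)
  have count: "(\<Sum>i<n. ind i) = card (I l)"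
    using sum_indicator_cluster[OF l, of "\<lambda>_. 1"] by (simp add: ind_def)
  have "(\<Sum>i<n. \<Sum>j<n. A i j * (ind i - ind j)\<^sup>2) \<le> (\<Sum>i<n. \<Sum>j<n. eps * (ind i + ind j))"
    using edge_term by (intro sum_mono) auto
  also have "\<dots> = (\<Sum>i<n. real n * eps * ind i + eps * (\<Sum>j<n. ind j))"
    by (intro sum.cong refl) (simp add: sum.distrib sum_distrib_left algebra_simps)
  also have "\<dots> = 2 * (n * card (I l) * eps)"
    using count by (simp add: sum.distrib sum_distrib_left[symmetric] algebra_simps)
  finally show ?thesis unfolding dirichlet_def ind_def by simp
qed

lemma cluster_weight_tail: "l < k \<Longrightarrow> lam j * (\<Sum>c\<in>{j..<n}. cluster_weight l c) \<le> n * eps / w"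
proof -
  assume l: "l < k"
  have "lam j * (\<Sum>c\<in>{j..<n}. cluster_weight l c)
      = lam j * (\<Sum>c\<in>{j..<n}. (coeff (indicator (I l)) c)\<^sup>2) / vol l"
    unfolding cluster_weight_def by (simp add: sum_divide_distrib[symmetric])
  also have "\<dots> \<le> (n * card (I l) * eps) / (card (I l) * w)"
  proof (rule frac_le)
    show "lam j * (\<Sum>c\<in>{j..<n}. (coeff (indicator (I l)) c)\<^sup>2) \<le> n * card (I l) * eps"
      using lam_tail_le_dirichlet dirichlet_indicator_le[OF l] by (rule order_trans)
    show "0 < card (I l) * w" using card_cluster[OF l] w_pos by simp
  qed (use eps_nonneg card_mult_w_le_vol[OF l] in auto)
  also have "\<dots> = n * eps / w" using card_cluster[OF l] by simp
  finally show ?thesis .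
qed

lemma cluster_weight_bessel: "c < n \<Longrightarrow> (\<Sum>l<k. cluster_weight l c) \<le> 1"
proof -
  assume c: "c < n"
  have "cluster_weight l c \<le> (\<Sum>i\<in>I l. D i * (emb c i)\<^sup>2)" if l: "l < k" for l
  proof -
    have "(coeff (indicator (I l)) c)\<^sup>2 \<le> vol l * (\<Sum>i\<in>I l. D i * (emb c i)\<^sup>2)"
      unfolding coeff_indicator[OF l] vol_def
      using cluster_subset[OF l] by (intro weighted_cauchy_schwarz) (auto simp: D_nonneg)
    then show ?thesis unfolding cluster_weight_def using vol_pos[OF l] by (simp add: field_simps)
  qed
  then have "(\<Sum>l<k. cluster_weight l c) \<le> (\<Sum>l<k. \<Sum>i\<in>I l. D i * (emb c i)\<^sup>2)"
    by (intro sum_mono) auto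
  also have "\<dots> = 1"
    using sum_over_clusters[of "\<lambda>i. D i * (emb c i)\<^sup>2"] emb_normalized[OF c] by linarith
  finally show ?thesis .
qed

text \<open>The part of a low-energy eigenvector not explained by the cluster indicators is small,
  because the eigenvector is nearly constant on each cluster.\<close>
lemma cluster_weight_deficit: "c < n \<Longrightarrow> 1 - (\<Sum>l<k. cluster_weight l c) \<le> 2 * real n ^ 3 * lam c / w"
proof -
  assume c: "c < n"
  have per_cluster: "(\<Sum>i\<in>I l. D i * (emb c i)\<^sup>2) - cluster_weight l c \<le> vol l * (2 * n * lam c / w)"
    if l: "l < k" for l
  proof -
    obtain i0 where i0: "i0 \<in> I l" using card_cluster[OF l] by fastforce
    have "vol l * (\<Sum>i\<in>I l. D i * (emb c i)\<^sup>2) - (coeff (indicator (I l)) c)\<^sup>2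
        \<le> vol l * (\<Sum>i\<in>I l. D i * (emb c i - emb c i0)\<^sup>2)"
      unfolding coeff_indicator[OF l] vol_def by (rule weighted_variance_le)
    also have "\<dots> \<le> vol l * (\<Sum>i\<in>I l. D i * (2 * n * lam c / w))"
    proof (rule mult_left_mono[OF sum_mono])
      fix i assume i: "i \<in> I l"
      have "w * (emb c i - emb c i0)\<^sup>2 \<le> 2 * n * lam c"
        using emb_diff_sq_le[OF cluster_connected[OF l i i0]] cluster_subset[OF l] i w_pos c by auto
      then show "D i * (emb c i - emb c i0)\<^sup>2 \<le> D i * (2 * n * lam c / w)"
        using w_pos D_nonneg cluster_subset[OF l] i by (intro mult_left_mono) (auto simp: field_simps)
    qed (use vol_pos[OF l] in auto)
    also have "\<dots> = vol l * (vol l * (2 * n * lam c / w))"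
      unfolding vol_def by (simp only: sum_distrib_right)
    finally show ?thesis unfolding cluster_weight_def using vol_pos[OF l] by (simp add: field_simps)
  qed
  have "1 - (\<Sum>l<k. cluster_weight l c) = (\<Sum>l<k. (\<Sum>i\<in>I l. D i * (emb c i)\<^sup>2) - cluster_weight l c)"
    using sum_over_clusters[of "\<lambda>i. D i * (emb c i)\<^sup>2"] emb_normalized[OF c] by (simp add: sum_subtractf)
  also have "\<dots> \<le> (\<Sum>l<k. vol l * (2 * n * lam c / w))" using per_cluster by (intro sum_mono) auto
  also have "\<dots> = (\<Sum>i<n. D i) * (2 * n * lam c / w)"
    unfolding sum_vol[symmetric] by (simp only: sum_distrib_right)
  also have "\<dots> \<le> (real n)\<^sup>2 * (2 * n * lam c / w)"
    using sum_D_le lam_nonneg[OF c] w_pos by (intro mult_right_mono) auto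
  also have "\<dots> = 2 * real n ^ 3 * lam c / w" by (simp add: power2_eq_square power3_eq_cube)
  finally show ?thesis .
qed

text \<open>The \<open>k\<close> normalised cluster indicators are \<open>D\<close>-orthonormal and have small energy; together they
  carry weight at least \<open>1\<close> beyond the first \<open>k - 1\<close> eigenvectors.\<close>
lemma lam_upper: "lam (k - 1) \<le> k * n * eps / w"
proof -
  define F where "F = {k - 1..<n}"
  have split: "(\<Sum>c<n. g c) = (\<Sum>c<k - 1. g c) + (\<Sum>c\<in>F. g c)" for g :: "nat \<Rightarrow> real"
    unfolding F_def lessThan_atLeast0 using k_less_n by (simp add: sum.atLeastLessThan_concat)
  have head: "(\<Sum>l<k. \<Sum>c<k - 1. cluster_weight l c) \<le> real k - 1"
  proof -
    have "(\<Sum>l<k. \<Sum>c<k - 1. cluster_weight l c) = (\<Sum>c<k - 1. \<Sum>l<k. cluster_weight l c)"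
      by (rule sum.swap)
    also have "\<dots> \<le> (\<Sum>c<k - 1. 1)" using k_less_n by (intro sum_mono cluster_weight_bessel) auto
    finally show ?thesis using k_pos by (simp add: of_nat_diff)
  qed
  have "(\<Sum>l<k. \<Sum>c<n. cluster_weight l c) = k" by (simp add: cluster_weight_sum)
  then have tail: "1 \<le> (\<Sum>l<k. \<Sum>c\<in>F. cluster_weight l c)"
    using head unfolding split sum.distrib by linarith
  have "0 \<le> lam (k - 1)" using lam_nonneg k_less_n by simp
  then have "lam (k - 1) \<le> lam (k - 1) * (\<Sum>l<k. \<Sum>c\<in>F. cluster_weight l c)"
    using mult_left_mono[OF tail, of "lam (k - 1)"] by simp
  also have "\<dots> = (\<Sum>l<k. lam (k - 1) * (\<Sum>c\<in>F. cluster_weight l c))"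
    by (simp add: sum_distrib_left)
  also have "\<dots> \<le> (\<Sum>l<k. n * eps / w)"
    unfolding F_def by (intro sum_mono cluster_weight_tail) auto
  finally show ?thesis by simp
qed

text \<open>The first \<open>k + 1\<close> eigenvectors cannot all be explained by the \<open>k\<close> cluster indicators.\<close>
lemma lam_lower: "w \<le> 2 * (k + 1) * real n ^ 3 * lam k"
proof -
  have "(\<Sum>c\<le>k. \<Sum>l<k. cluster_weight l c) = (\<Sum>l<k. \<Sum>c\<le>k. cluster_weight l c)"
    by (rule sum.swap)
  also have "\<dots> \<le> (\<Sum>l<k. \<Sum>c<n. cluster_weight l c)"
    using k_less_n by (intro sum_mono sum_mono2) (auto simp: cluster_weight_nonneg)
  also have "\<dots> = k" by (simp add: cluster_weight_sum)
  finally have upper: "(\<Sum>c\<le>k. \<Sum>l<k. cluster_weight l c) \<le> k" .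
  have "(\<Sum>c\<le>k. 1 - 2 * real n ^ 3 * lam k / w) \<le> (\<Sum>c\<le>k. \<Sum>l<k. cluster_weight l c)"
  proof (rule sum_mono)
    fix c assume "c \<in> {..k}"
    then have c: "c \<le> k" "c < n" using k_less_n by auto
    have "2 * real n ^ 3 * lam c / w \<le> 2 * real n ^ 3 * lam k / w"
      using lam_mono[OF c(1)] k_less_n w_pos by (intro divide_right_mono mult_left_mono) auto
    then show "1 - 2 * real n ^ 3 * lam k / w \<le> (\<Sum>l<k. cluster_weight l c)"
      using cluster_weight_deficit[OF c(2)] by linarith
  qed
  then have "(k + 1) * (1 - 2 * real n ^ 3 * lam k / w) \<le> k" using upper by simp
  then have "1 \<le> (k + 1) * (2 * real n ^ 3 * lam k / w)" by (simp add: algebra_simps)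
  then show ?thesis using w_pos by (simp add: field_simps)
qed

lemma emb_dist_eq: "emb_dist k D U i j = L2_set (\<lambda>c. emb c i - emb c j) {..<k}"
  unfolding emb_dist_def L2_set_def emb_def by simp

definition radius :: real where
  "radius = sqrt (2 * k * n * lam (k - 1) / w)"

lemma radius_nonneg: "0 \<le> radius"
  unfolding radius_def using lam_nonneg[of "k - 1"] k_less_n w_pos by simp

lemma L2_set_le_radius:
  assumes "\<And>c. c < k \<Longrightarrow> (d c)\<^sup>2 \<le> 2 * n * lam (k - 1) / w"
  shows "L2_set d {..<k} \<le> radius"
proof -
  have "(\<Sum>c<k. (d c)\<^sup>2) \<le> (\<Sum>c<k. 2 * n * lam (k - 1) / w)"
    using assms by (intro sum_mono) auto
  then show ?thesis unfolding L2_set_def radius_def by (simp add: field_simps)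
qed

lemma emb_diff_sq_le_same_cluster:
  assumes l: "l < k" and i: "i \<in> I l" and j: "j \<in> I l" and c: "c < k"
  shows "(emb c i - emb c j)\<^sup>2 \<le> 2 * n * lam (k - 1) / w"
proof -
  have cn: "c < n" using c k_less_n by simp
  have "w * (emb c i - emb c j)\<^sup>2 \<le> 2 * n * lam c"
    using emb_diff_sq_le[OF cluster_connected[OF l i j] _ w_pos cn] cluster_subset[OF l] i by auto
  also have "\<dots> \<le> 2 * n * lam (k - 1)" using lam_mono[of c "k - 1"] c k_less_n by simp
  finally show ?thesis using w_pos by (simp add: field_simps)
qed

lemma emb_dist_same_cluster: "l < k \<Longrightarrow> i \<in> I l \<Longrightarrow> j \<in> I l \<Longrightarrow> emb_dist k D U i j \<le> radius"
  unfolding emb_dist_eq by (intro L2_set_le_radius emb_diff_sq_le_same_cluster)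

lemma emb_centroid_dist:
  assumes m: "m < k" and g: "g \<in> I m"
  shows "L2_set (\<lambda>c. emb c g - centroid m c) {..<k} \<le> radius"
proof (rule L2_set_le_radius)
  fix c assume c: "c < k"
  define h where "h i = emb c g - emb c i" for i
  have "(\<Sum>i\<in>I m. D i * h i) = vol m * emb c g - coeff (indicator (I m)) c"
    unfolding h_def coeff_indicator[OF m] vol_def
    by (simp add: algebra_simps sum_subtractf sum_distrib_right)
  then have diff: "emb c g - centroid m c = (\<Sum>i\<in>I m. D i * h i) / vol m"
    unfolding centroid_def using vol_pos[OF m] by (simp add: field_simps)
  have "(\<Sum>i\<in>I m. D i * h i)\<^sup>2 \<le> vol m * (\<Sum>i\<in>I m. D i * (h i)\<^sup>2)"
    unfolding vol_def using cluster_subset[OF m] by (intro weighted_cauchy_schwarz) (auto simp: D_nonneg)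
  also have "\<dots> \<le> vol m * (\<Sum>i\<in>I m. D i * (2 * n * lam (k - 1) / w))"
  proof (rule mult_left_mono[OF sum_mono])
    fix i assume i: "i \<in> I m"
    show "D i * (h i)\<^sup>2 \<le> D i * (2 * n * lam (k - 1) / w)"
      unfolding h_def using emb_diff_sq_le_same_cluster[OF m g i c] D_nonneg cluster_subset[OF m] i
      by (intro mult_left_mono) auto
  qed (use vol_pos[OF m] in auto)
  also have "\<dots> = vol m * (vol m * (2 * n * lam (k - 1) / w))"
    unfolding vol_def by (simp only: sum_distrib_right)
  finally show "(emb c g - centroid m c)\<^sup>2 \<le> 2 * n * lam (k - 1) / w"
    unfolding diff using vol_pos[OF m] by (simp add: power_divide field_simps power2_eq_square)
qed

lemma radius_sq_le: "radius\<^sup>2 \<le> 2 * (real k)\<^sup>2 * (real n)\<^sup>2 * eps / w\<^sup>2"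
proof -
  have "radius\<^sup>2 = 2 * k * n * lam (k - 1) / w"
    unfolding radius_def using lam_nonneg[of "k - 1"] k_less_n w_pos by simp
  also have "\<dots> \<le> 2 * k * n * (k * n * eps / w) / w"
    using lam_upper w_pos by (intro divide_right_mono mult_left_mono) auto
  also have "\<dots> = 2 * (real k)\<^sup>2 * (real n)\<^sup>2 * eps / w\<^sup>2"
    by (simp add: power2_eq_square)
  finally show ?thesis .
qed

definition indicator_diff :: "nat \<Rightarrow> nat \<Rightarrow> nat \<Rightarrow> real" where
  "indicator_diff m m' i = indicator (I m) i / vol m - indicator (I m') i / vol m'"

lemma coeff_indicator_diff:
  "coeff (indicator_diff m m') c = centroid m c - centroid m' c"
  unfolding coeff_def indicator_diff_def centroid_def
  by (simp add: algebra_simps sum_subtractf sum_divide_distrib)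

lemma indicator_diff_parseval:
  assumes m: "m < k" "m' < k" "m \<noteq> m'"
  shows "(\<Sum>c<n. (coeff (indicator_diff m m') c)\<^sup>2) = 1 / vol m + 1 / vol m'"
proof -
  have disj: "I m \<inter> I m' = {}" using clusters_disjoint m by simp
  have "D i * (indicator_diff m m' i)\<^sup>2
      = indicator (I m) i * (D i / (vol m)\<^sup>2) + indicator (I m') i * (D i / (vol m')\<^sup>2)" for i
    using disj unfolding indicator_diff_def indicator_def by (auto simp: power_divide)
  then have "(\<Sum>c<n. (coeff (indicator_diff m m') c)\<^sup>2)
      = (\<Sum>i<n. indicator (I m) i * (D i / (vol m)\<^sup>2)) + (\<Sum>i<n. indicator (I m') i * (D i / (vol m')\<^sup>2))"
    unfolding coeff_parseval by (simp add: sum.distrib)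
  also have "\<dots> = vol m / (vol m)\<^sup>2 + vol m' / (vol m')\<^sup>2"
    unfolding sum_indicator_cluster[OF m(1)] sum_indicator_cluster[OF m(2)] vol_def
    by (simp add: sum_divide_distrib)
  also have "\<dots> = 1 / vol m + 1 / vol m'"
    using vol_pos[OF m(1)] vol_pos[OF m(2)] by (simp add: power2_eq_square)
  finally show ?thesis .
qed

lemma dirichlet_cluster_constant_le:
  assumes const: "\<And>l i j. l < k \<Longrightarrow> i \<in> I l \<Longrightarrow> j \<in> I l \<Longrightarrow> \<phi> i = \<phi> j"
    and osc: "\<And>i j. i < n \<Longrightarrow> j < n \<Longrightarrow> \<bar>\<phi> i - \<phi> j\<bar> \<le> M"
  shows "dirichlet \<phi> \<le> (real n)\<^sup>2 * eps * M\<^sup>2 / 2"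
proof -
  have "A i j * (\<phi> i - \<phi> j)\<^sup>2 \<le> eps * M\<^sup>2" if i: "i < n" and j: "j < n" for i j
  proof -
    obtain l where l: "l < k" "i \<in> I l" using cluster_exists[OF i] by blast
    show ?thesis
    proof (cases "j \<in> I l")
      case True
      then show ?thesis using const[OF l True] eps_nonneg by simp
    next
      case False
      have "(\<phi> i - \<phi> j)\<^sup>2 \<le> M\<^sup>2"
        using osc[OF i j] by (metis abs_ge_zero order_trans power2_abs power_mono)
      then show ?thesis
        using cross_weight_le[OF l j False] A_nonneg[OF i j] eps_nonneg by (intro mult_mono) auto
    qed
  qed
  then have "(\<Sum>i<n. \<Sum>j<n. A i j * (\<phi> i - \<phi> j)\<^sup>2) \<le> (\<Sum>i<n. \<Sum>j<n. eps * M\<^sup>2)"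
    by (intro sum_mono) auto
  then show ?thesis unfolding dirichlet_def by (simp add: power2_eq_square)
qed

lemma dirichlet_indicator_diff_le:
  assumes m: "m < k" "m' < k" "m \<noteq> m'"
  shows "dirichlet (indicator_diff m m') \<le> (real n)\<^sup>2 * eps * (1 / vol m + 1 / vol m')\<^sup>2 / 2"
proof (rule dirichlet_cluster_constant_le)
  fix l i j assume "l < k" "i \<in> I l" "j \<in> I l"
  then have "i \<in> I q \<longleftrightarrow> j \<in> I q" if "q < k" for q
    using cluster_unique that by blast
  then show "indicator_diff m m' i = indicator_diff m m' j"
    unfolding indicator_diff_def indicator_def using m by simp
next
  fix i j
  have abs_le: "\<bar>x - y\<bar> \<le> a + b"
    if "x \<in> {a, - b, 0}" "y \<in> {a, - b, 0}" "0 \<le> a" "0 \<le> b" for x y a b :: real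
    using that by auto
  have "indicator_diff m m' p \<in> {1 / vol m, - (1 / vol m'), 0}" for p
    using clusters_disjoint[OF m] unfolding indicator_diff_def indicator_def by auto
  then show "\<bar>indicator_diff m m' i - indicator_diff m m' j\<bar> \<le> 1 / vol m + 1 / vol m'"
    using vol_pos[OF m(1)] vol_pos[OF m(2)] by (intro abs_le) auto
qed

text \<open>The difference of two normalised indicators has small energy, so by the spectral gap
  \<open>lam k \<ge> w / (2 (k + 1) n^3)\<close> at most half of its mass lies beyond the first \<open>k\<close> eigenvectors.\<close>
lemma indicator_diff_tail_le:
  assumes gap: "2 * (k + 1) * real n ^ 5 * eps \<le> w\<^sup>2" and m: "m < k" "m' < k" "m \<noteq> m'"
  shows "(\<Sum>c\<in>{k..<n}. (coeff (indicator_diff m m') c)\<^sup>2) \<le> (1 / vol m + 1 / vol m') / 2"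
proof -
  define Y where "Y = 1 / vol m + 1 / vol m'"
  define tail where "tail = (\<Sum>c\<in>{k..<n}. (coeff (indicator_diff m m') c)\<^sup>2)"
  have "1 / vol l \<le> 1 / (2 * w)" if "l < k" for l
    using two_w_le_vol[OF that] vol_pos[OF that] w_pos by (intro divide_left_mono) auto
  then have "Y \<le> 1 / (2 * w) + 1 / (2 * w)" unfolding Y_def using m by (intro add_mono)
  then have Y: "0 < Y" "Y \<le> 1 / w"
    using vol_pos[OF m(1)] vol_pos[OF m(2)] unfolding Y_def by (simp_all add: add_pos_pos)
  have tail_nonneg: "0 \<le> tail" unfolding tail_def by (simp add: sum_nonneg)
  have "w * tail \<le> 2 * (k + 1) * real n ^ 3 * (lam k * tail)"
    using mult_right_mono[OF lam_lower tail_nonneg] by (simp add: mult_ac)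
  also have "\<dots> \<le> 2 * (k + 1) * real n ^ 3 * ((real n)\<^sup>2 * eps * Y\<^sup>2 / 2)"
    using lam_tail_le_dirichlet[of k "indicator_diff m m'"] dirichlet_indicator_diff_le[OF m]
    unfolding tail_def Y_def by (intro mult_left_mono) auto
  also have "\<dots> = (2 * (k + 1) * real n ^ 5 * eps) * (Y\<^sup>2 / 2)"
    by (simp add: power2_eq_square power3_eq_cube eval_nat_numeral)
  also have "\<dots> \<le> w\<^sup>2 * (Y * (1 / w) / 2)"
  proof (rule mult_mono[OF gap])
    show "Y\<^sup>2 / 2 \<le> Y * (1 / w) / 2"
      using mult_left_mono[OF Y(2), of Y] Y(1) by (simp add: power2_eq_square)
  qed simp_all
  also have "\<dots> = w * (Y / 2)" using w_pos by (simp add: power2_eq_square)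
  finally show ?thesis unfolding tail_def[symmetric] Y_def[symmetric] using w_pos by simp
qed

lemma centroid_separation:
  assumes gap: "2 * (k + 1) * real n ^ 5 * eps \<le> w\<^sup>2" and m: "m < k" "m' < k" "m \<noteq> m'"
  shows "1 / (2 * n) \<le> L2_set (\<lambda>c. centroid m c - centroid m' c) {..<k}"
proof -
  define Y where "Y = 1 / vol m + 1 / vol m'"
  have Y_pos: "0 < Y"
    unfolding Y_def using vol_pos[OF m(1)] vol_pos[OF m(2)] by (simp add: add_pos_pos)
  define a where "a c = (coeff (indicator_diff m m') c)\<^sup>2" for c
  have "(\<Sum>c<n. a c) = (\<Sum>c<k. a c) + (\<Sum>c\<in>{k..<n}. a c)"
    unfolding lessThan_atLeast0 using k_less_n by (simp add: sum.atLeastLessThan_concat)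
  moreover have "(\<Sum>c<n. a c) = Y" "(\<Sum>c\<in>{k..<n}. a c) \<le> Y / 2"
    using indicator_diff_parseval[OF m] indicator_diff_tail_le[OF gap m] unfolding a_def Y_def by auto
  ultimately have half: "Y / 2 \<le> (\<Sum>c<k. a c)" by linarith
  have n_Y: "1 / (real n)\<^sup>2 \<le> Y"
  proof -
    have "1 / (real n)\<^sup>2 \<le> 1 / vol m"
      using vol_le[OF m(1)] vol_pos[OF m(1)] k_less_n by (intro divide_left_mono) auto
    moreover have "0 < 1 / vol m'" using vol_pos[OF m(2)] by simp
    ultimately show ?thesis unfolding Y_def by linarith
  qed
  have "(1 / (2 * n))\<^sup>2 = 1 / (real n)\<^sup>2 / 4" by (simp add: power2_eq_square)
  also have "\<dots> \<le> Y / 4" using n_Y by simp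
  also have "\<dots> \<le> Y / 2" using Y_pos by simp
  finally have "(1 / (2 * n))\<^sup>2 \<le> (\<Sum>c<k. a c)" using half by linarith
  then have "(1 / (2 * n))\<^sup>2 \<le> (\<Sum>c<k. (centroid m c - centroid m' c)\<^sup>2)"
    unfolding a_def coeff_indicator_diff .
  then show ?thesis unfolding L2_set_def by (rule real_le_rsqrt)
qed

lemma emb_dist_other_cluster:
  assumes gap: "2 * (k + 1) * real n ^ 5 * eps \<le> w\<^sup>2"
    and m: "m < k" and g: "g \<in> I m" and h: "h < n" "h \<notin> I m"
  shows "1 / (2 * n) - 2 * radius \<le> emb_dist k D U g h"
proof -
  obtain m' where m': "m' < k" "h \<in> I m'" using cluster_exists[OF h(1)] by blast
  have "m \<noteq> m'" using m' h(2) by blast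
  have "1 / (2 * n) \<le> L2_set (\<lambda>c. centroid m c - centroid m' c) {..<k}"
    by (rule centroid_separation[OF gap m m'(1) \<open>m \<noteq> m'\<close>])
  also have "\<dots> = L2_set (\<lambda>c. (emb c g - emb c h) + (- (emb c g - centroid m c))
      + (emb c h - centroid m' c)) {..<k}"
    by (intro L2_set_cong) auto
  also have "\<dots> \<le> emb_dist k D U g h + L2_set (\<lambda>c. emb c g - centroid m c) {..<k}
      + L2_set (\<lambda>c. emb c h - centroid m' c) {..<k}"
    unfolding emb_dist_eq
    by (rule order_trans[OF L2_set_triangle_ineq
          add_right_mono[OF order_trans[OF L2_set_triangle_ineq]]])
      (simp add: L2_set_def power2_commute)
  also have "\<dots> \<le> emb_dist k D U g h + radius + radius"
    using emb_centroid_dist[OF m g] emb_centroid_dist[OF m'] by linarith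
  finally show ?thesis by simp
qed

theorem cluster_separation:
  assumes gap: "2 * (k + 1) * real n ^ 5 * eps \<le> w\<^sup>2"
    and small: "72 * (real k)\<^sup>2 * real n ^ 4 * eps \<le> (q * w)\<^sup>2" and q: "0 \<le> q" "q \<le> 1"
    and l: "l < k" "i \<in> I l" "j \<in> I l" and m: "m < k" "g \<in> I m" "h < n" "h \<notin> I m"
  shows "emb_dist k D U i j \<le> q * emb_dist k D U g h"
proof -
  have n: "0 < real n" using k_less_n by simp
  have "(6 * n * radius)\<^sup>2 = 36 * (real n)\<^sup>2 * radius\<^sup>2" by (simp add: power_mult_distrib)
  also have "\<dots> \<le> 36 * (real n)\<^sup>2 * (2 * (real k)\<^sup>2 * (real n)\<^sup>2 * eps / w\<^sup>2)"
    by (rule mult_left_mono[OF radius_sq_le]) simp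
  also have "\<dots> = 72 * (real k)\<^sup>2 * real n ^ 4 * eps / w\<^sup>2"
    by (simp add: power2_eq_square eval_nat_numeral)
  also have "\<dots> \<le> q\<^sup>2" using small w_pos by (simp add: field_simps power_mult_distrib)
  finally have "6 * n * radius \<le> q" using q(1) by (rule power2_le_imp_le)
  then have three_radius: "3 * radius \<le> q / (2 * n)" using n by (simp add: field_simps)
  have "emb_dist k D U i j \<le> radius" by (rule emb_dist_same_cluster[OF l])
  also have "\<dots> \<le> q * (1 / (2 * n) - 2 * radius)"
    using three_radius mult_right_mono[OF q(2) radius_nonneg] by (simp add: algebra_simps)
  also have "\<dots> \<le> q * emb_dist k D U g h"
    by (rule mult_left_mono[OF emb_dist_other_cluster[OF gap m] q(1)])
  finally show ?thesis .
qed

end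

section \<open>Kernel affinities of a point cloud\<close>

lemma exp_neg_divide_mono:
  fixes a b s :: real
  assumes "0 < s" "a \<le> b"
  shows "exp (- b / s) \<le> exp (- a / s)"
proof -
  have "- b / s \<le> - a / s" using assms by (intro divide_right_mono) auto
  then show ?thesis by simp
qed

lemma exp_bandwidth_bound:
  fixes \<alpha> \<sigma> \<delta> B :: real
  assumes \<alpha>: "0 < \<alpha>" and \<sigma>: "0 < \<sigma>" and \<delta>: "0 < \<delta>" and B: "1 < B"
    and bound: "\<sigma> < \<delta> powr (1 / \<alpha>) * ln B powr (- 1 / \<alpha>)"
  shows "exp (- \<delta> / \<sigma> powr \<alpha>) * B < 1"
proof -
  define s where "s = \<sigma> powr \<alpha>"
  have s: "0 < s" unfolding s_def using \<sigma> by simp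
  have lnB: "0 < ln B" using B by simp
  have "s < (\<delta> powr (1 / \<alpha>) * ln B powr (- 1 / \<alpha>)) powr \<alpha>"
    unfolding s_def using bound \<alpha> \<sigma> by (intro powr_less_mono2) auto
  also have "\<dots> = (\<delta> powr (1 / \<alpha>)) powr \<alpha> * (ln B powr (- 1 / \<alpha>)) powr \<alpha>"
    by (rule powr_mult)
  also have "\<dots> = \<delta> powr (1 / \<alpha> * \<alpha>) * ln B powr (- 1 / \<alpha> * \<alpha>)"
    by (simp add: powr_powr)
  also have "\<dots> = \<delta> / ln B"
    using \<alpha> \<delta> lnB by (simp add: powr_minus_divide)
  finally have "ln B < \<delta> / s" using s lnB by (simp add: field_simps)
  then have "exp (ln B) < exp (\<delta> / s)" by simp
  then have "B < exp (\<delta> / s)" using B by simp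
  then have "exp (- \<delta> / s) * B < exp (- \<delta> / s) * exp (\<delta> / s)" by simp
  also have "\<dots> = exp (- \<delta> / s + \<delta> / s)" by (rule exp_add[symmetric])
  also have "\<dots> = 1" by simp
  finally show ?thesis unfolding s_def .
qed

lemma affinity_eq_exp:
  "i \<noteq> j \<Longrightarrow> affinity \<alpha> \<sigma> x i j = exp (- (dist (x i) (x j) powr \<alpha>) / \<sigma> powr \<alpha>)"
  unfolding affinity_def K_sigma_def by (simp add: powr_divide)

lemma affinity_le_1: "affinity \<alpha> \<sigma> x i j \<le> 1"
  unfolding affinity_def K_sigma_def by simp

lemma affinity_weighted_graph: "weighted_graph n (affinity \<alpha> \<sigma> x) (degree \<alpha> \<sigma> x n)"
  by unfold_locales (auto simp: affinity_def K_sigma_def degree_def dist_commute)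

lemma partition_image_indices:
  assumes cover: "(\<Union>l<k. C l) = x ` {..<n}" and l: "l < k"
  shows "C l = x ` {i. i < n \<and> x i \<in> C l}"
proof (intro equalityI subsetI)
  fix y assume y: "y \<in> C l"
  have "C l \<subseteq> x ` {..<n}" unfolding cover[symmetric] using l by (intro UN_upper) simp
  then obtain i where i: "i < n" and yi: "y = x i" using y by blast
  show "y \<in> x ` {i. i < n \<and> x i \<in> C l}" unfolding yi by (rule imageI) (use i y yi in simp)
next
  fix y assume "y \<in> x ` {i. i < n \<and> x i \<in> C l}"
  then obtain i where "x i \<in> C l" "y = x i" by blast
  then show "y \<in> C l" by simp
qed

lemma partition_indices_cover:
  assumes cover: "(\<Union>l<k. C l) = x ` {..<n}"
  shows "(\<Union>l<k. {i. i < n \<and> x i \<in> C l}) = {..<n}"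
proof (intro equalityI subsetI)
  fix i assume i: "i \<in> {..<n}"
  then have "x i \<in> (\<Union>l<k. C l)" unfolding cover by (rule imageI)
  then obtain l where "l < k" "x i \<in> C l" by blast
  then show "i \<in> (\<Union>l<k. {i. i < n \<and> x i \<in> C l})" using i by blast
qed auto

lemma affinity_cluster_chain:
  fixes x :: "nat \<Rightarrow> 'a::metric_space" and l k :: nat
  assumes \<alpha>: "0 < \<alpha>" and \<sigma>: "0 < \<sigma>" and inj: "inj_on x {..<n}" and cover: "(\<Union>l<k. C l) = x ` {..<n}"
    and l: "l < k" and conn: "connected_at_distance (C l) (\<delta>l l)"
    and i: "i < n" "x i \<in> C l" and j: "j < n" "x j \<in> C l"
  shows "(\<lambda>a b. a < n \<and> b < n \<and>
           exp (- Max ((\<lambda>l. \<delta>l l powr \<alpha>) ` {..<k}) / \<sigma> powr \<alpha>) \<le> affinity \<alpha> \<sigma> x a b)\<^sup>*\<^sup>* i j"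
proof -
  define J where "J = {i. i < n \<and> x i \<in> C l}"
  have "C l = x ` J" unfolding J_def by (rule partition_image_indices[OF cover l])
  then have "connected_at_distance (x ` J) (\<delta>l l)" using conn by simp
  moreover have "inj_on x J" by (rule inj_on_subset[OF inj]) (auto simp: J_def)
  moreover have "finite J" "i \<in> J" "j \<in> J" using i j by (auto simp: J_def)
  ultimately have chain: "(\<lambda>a b. a \<in> J \<and> b \<in> J \<and> a \<noteq> b \<and> dist (x a) (x b) \<le> \<delta>l l)\<^sup>*\<^sup>* i j"
    by (intro connected_at_distance_chain)
  have weight: "exp (- Max ((\<lambda>l. \<delta>l l powr \<alpha>) ` {..<k}) / \<sigma> powr \<alpha>) \<le> affinity \<alpha> \<sigma> x a b"
    if "a \<noteq> b" "dist (x a) (x b) \<le> \<delta>l l" for a b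
  proof -
    have "dist (x a) (x b) powr \<alpha> \<le> \<delta>l l powr \<alpha>" using that \<alpha> by (intro powr_mono2) auto
    also have "\<dots> \<le> Max ((\<lambda>l. \<delta>l l powr \<alpha>) ` {..<k})" using l by (intro Max_ge) auto
    finally show ?thesis unfolding affinity_eq_exp[OF that(1)] using \<sigma> by (intro exp_neg_divide_mono) auto
  qed
  have "(\<lambda>a b. a \<in> J \<and> b \<in> J \<and> a \<noteq> b \<and> dist (x a) (x b) \<le> \<delta>l l)
      \<le> (\<lambda>a b. a < n \<and> b < n \<and> exp (- Max ((\<lambda>l. \<delta>l l powr \<alpha>) ` {..<k}) / \<sigma> powr \<alpha>)
            \<le> affinity \<alpha> \<sigma> x a b)"
    by (intro predicate2I conjI weight) (auto simp: J_def)
  then show ?thesis using chain by (rule rtranclp_mono[THEN predicate2D])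
qed

lemma affinity_cross_le:
  fixes l k :: nat
  assumes \<alpha>: "0 < \<alpha>" and \<sigma>: "0 < \<sigma>" and l: "l < k"
    and i: "i < n" "x i \<in> C l" and j: "j < n" "x j \<notin> C l"
  shows "affinity \<alpha> \<sigma> x i j
    \<le> exp (- Min ((\<lambda>m. setdist (C m) (x ` {..<n} - C m) powr \<alpha>) ` {..<k}) / \<sigma> powr \<alpha>)"
proof -
  have "setdist (C l) (x ` {..<n} - C l) \<le> dist (x i) (x j)"
    using i j by (intro setdist_le_dist) auto
  then have "setdist (C l) (x ` {..<n} - C l) powr \<alpha> \<le> dist (x i) (x j) powr \<alpha>"
    using \<alpha> by (intro powr_mono2) auto
  moreover have "Min ((\<lambda>m. setdist (C m) (x ` {..<n} - C m) powr \<alpha>) ` {..<k})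
      \<le> setdist (C l) (x ` {..<n} - C l) powr \<alpha>"
    using l by (intro Min_le finite_imageI) auto
  ultimately have "Min ((\<lambda>m. setdist (C m) (x ` {..<n} - C m) powr \<alpha>) ` {..<k}) \<le> dist (x i) (x j) powr \<alpha>"
    by linarith
  moreover have "i \<noteq> j" using i j by blast
  ultimately show ?thesis
    unfolding affinity_eq_exp[OF \<open>i \<noteq> j\<close>] using \<sigma> by (intro exp_neg_divide_mono) auto
qed

lemma affinity_clustered_eigenbasis:
  fixes x :: "nat \<Rightarrow> 'a::metric_space" and C :: "nat \<Rightarrow> 'a set"
  assumes \<alpha>: "0 < \<alpha>" and \<sigma>: "0 < \<sigma>" and inj: "inj_on x {..<n}" and k: "1 \<le> k"
    and disj: "\<forall>l<k. \<forall>m<k. l \<noteq> m \<longrightarrow> C l \<inter> C m = {}"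
    and cover: "(\<Union>l<k. C l) = x ` {..<n}"
    and card: "\<forall>l<k. 2 \<le> card (C l)"
    and conn: "\<forall>l<k. connected_at_distance (C l) (\<delta>l l)"
    and eig: "ordered_eigenbasis n (norm_laplacian \<alpha> \<sigma> x n) U lam"
  shows "clustered_eigenbasis n (affinity \<alpha> \<sigma> x) (degree \<alpha> \<sigma> x n) k (\<lambda>l. {i. i < n \<and> x i \<in> C l})
           (exp (- Max ((\<lambda>l. \<delta>l l powr \<alpha>) ` {..<k}) / \<sigma> powr \<alpha>))
           (exp (- Min ((\<lambda>m. setdist (C m) (x ` {..<n} - C m) powr \<alpha>) ` {..<k}) / \<sigma> powr \<alpha>)) U lam"
proof -
  let ?I = "\<lambda>l. {i. i < n \<and> x i \<in> C l}"
  let ?w = "exp (- Max ((\<lambda>l. \<delta>l l powr \<alpha>) ` {..<k}) / \<sigma> powr \<alpha>)"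
  let ?eps = "exp (- Min ((\<lambda>m. setdist (C m) (x ` {..<n} - C m) powr \<alpha>) ` {..<k}) / \<sigma> powr \<alpha>)"
  have graph: "clustered_graph n (affinity \<alpha> \<sigma> x) (degree \<alpha> \<sigma> x n) k ?I ?w ?eps"
  proof (intro clustered_graph.intro clustered_graph_axioms.intro affinity_weighted_graph)
    show "1 \<le> k" by (rule k)
    show "(\<Union>l<k. ?I l) = {..<n}" by (rule partition_indices_cover[OF cover])
    show "?I l \<inter> ?I m = {}" if "l < k" "m < k" "l \<noteq> m" for l m
    proof -
      have "C l \<inter> C m = {}" using disj[rule_format, OF that] .
      then show ?thesis by (auto simp: disjoint_iff)
    qed
    show "2 \<le> card (?I l)" if l: "l < k" for l
    proof -
      define J where "J = ?I l"
      have "inj_on x J" by (rule inj_on_subset[OF inj]) (auto simp: J_def)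
      then have "card (C l) = card J"
        by (simp only: partition_image_indices[OF cover l, folded J_def] card_image)
      moreover have "2 \<le> card (C l)" using card l by blast
      ultimately show ?thesis unfolding J_def by linarith
    qed
    show "(\<lambda>a b. a < n \<and> b < n \<and> ?w \<le> affinity \<alpha> \<sigma> x a b)\<^sup>*\<^sup>* i j"
      if "l < k" "i \<in> ?I l" "j \<in> ?I l" for l i j
      by (rule affinity_cluster_chain[where C = C and \<delta>l = \<delta>l, OF \<alpha> \<sigma> inj cover that(1) conn[rule_format, OF that(1)]])
        (use that in auto)
    show "affinity \<alpha> \<sigma> x i j \<le> ?eps" if "l < k" "i \<in> ?I l" "j < n" "j \<notin> ?I l" for l i j
      by (rule affinity_cross_le[OF \<alpha> \<sigma> that(1)]) (use that in auto)
    show "affinity \<alpha> \<sigma> x i j \<le> 1" for i j by (rule affinity_le_1)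
    show "0 < ?w" "0 \<le> ?eps" by simp_all
  qed
  show ?thesis
    using graph eig[unfolded norm_laplacian_def]
    unfolding clustered_eigenbasis_def clustered_eigenbasis_axioms_def by blast
qed

lemma bandwidth_factor_bounds:
  fixes k n :: nat and z :: real
  assumes k: "1 \<le> k" and n: "1 \<le> n" and z: "5 \<le> z"
  shows "2 * (real k + 1) * real n ^ 5 \<le> 13 ^ 8 * real k ^ 9 * real n powr z"
    and "72 * (real k)\<^sup>2 \<le> 13 ^ 8 * real k ^ 9"
proof -
  have k1: "1 \<le> real k" using k by simp
  have k9: "real k \<le> real k ^ 9" "(real k)\<^sup>2 \<le> real k ^ 9"
    using power_increasing[of 1 9 "real k"] power_increasing[of 2 9 "real k"] k by simp_all
  have n1: "1 \<le> real n" using n by simp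
  have "real n ^ 5 = real n powr (5::real)" using n1 by (simp add: powr_realpow)
  also have "\<dots> \<le> real n powr z" using n1 z by (intro powr_mono) auto
  finally have n5: "real n ^ 5 \<le> real n powr z" .
  have "2 * (real k + 1) \<le> 2 * (real k ^ 9 + real k ^ 9)"
    using k9(1) order_trans[OF k1 k9(1)] by (intro mult_left_mono add_mono) auto
  also have "\<dots> \<le> 13 ^ 8 * real k ^ 9" by simp
  finally show "2 * (real k + 1) * real n ^ 5 \<le> 13 ^ 8 * real k ^ 9 * real n powr z"
    using n5 by (rule mult_mono) auto
  show "72 * (real k)\<^sup>2 \<le> 13 ^ 8 * real k ^ 9" by (rule mult_mono) (use k9(2) in auto)
qed

lemma bandwidth_gap_condition:
  fixes k n :: nat and z \<eta> w :: real
  assumes k: "1 \<le> k" and n: "1 \<le> n" and z: "10 \<le> z" and w: "0 < w" "w \<le> 1" and \<eta>: "0 < \<eta>"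
    and small: "\<eta> * (13 ^ 8 * real k ^ 9 * real n powr z) < 1"
  shows "2 * (k + 1) * real n ^ 5 * (\<eta> * w ^ 3) \<le> w\<^sup>2"
proof -
  have "2 * (real k + 1) * real n ^ 5 * \<eta> \<le> 13 ^ 8 * real k ^ 9 * real n powr z * \<eta>"
    using bandwidth_factor_bounds(1)[OF k n] z \<eta> by (intro mult_right_mono) auto
  then have factor: "2 * (real k + 1) * real n ^ 5 * \<eta> \<le> 1" using small by (simp add: mult.commute)
  have "2 * (k + 1) * real n ^ 5 * (\<eta> * w ^ 3) = (2 * (real k + 1) * real n ^ 5 * \<eta>) * w * w\<^sup>2"
    by (simp add: power2_eq_square power3_eq_cube)
  also have "\<dots> \<le> 1 * 1 * w\<^sup>2" using factor w by (intro mult_mono) auto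
  finally show ?thesis by simp
qed

lemma bandwidth_separation_condition:
  fixes k n :: nat and z \<eta> w :: real
  assumes k: "1 \<le> k" and n: "1 \<le> n" and z: "10 \<le> z" and w: "0 < w" "w \<le> 1" and \<eta>: "0 < \<eta>"
    and small: "\<eta> * (13 ^ 8 * real k ^ 9 * real n powr z) < 1"
  shows "72 * (real k)\<^sup>2 * real n ^ 4 * (\<eta> * w ^ 3) \<le> (real n powr ((4 - z) / 2) * w)\<^sup>2"
proof -
  have n1: "1 \<le> real n" using n by simp
  then have nz: "0 < real n powr z" by simp
  have "72 * (real k)\<^sup>2 * real n powr z * \<eta> \<le> 13 ^ 8 * real k ^ 9 * real n powr z * \<eta>"
    using bandwidth_factor_bounds(2)[OF k n] z nz \<eta> by (intro mult_right_mono) auto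
  then have factor: "72 * (real k)\<^sup>2 * real n powr z * \<eta> \<le> 1" using small by (simp add: mult.commute)
  have "(real n powr ((4 - z) / 2))\<^sup>2 = real n powr (of_nat 2 * ((4 - z) / 2))"
    using n1 by (intro powr_power) simp
  also have "of_nat 2 * ((4 - z) / 2) = 4 - z" by simp
  also have "real n powr (4 - z) = real n powr 4 / real n powr z" by (rule powr_diff)
  also have "real n powr 4 = real n ^ 4" using n1 by (simp add: powr_realpow)
  finally have q2: "(real n powr ((4 - z) / 2))\<^sup>2 = real n ^ 4 / real n powr z" .
  have "72 * (real k)\<^sup>2 * real n ^ 4 * (\<eta> * w ^ 3)
      = (72 * (real k)\<^sup>2 * real n powr z * \<eta>) * w * (real n ^ 4 / real n powr z * w\<^sup>2)"
    using nz by (simp add: field_simps power2_eq_square power3_eq_cube)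
  also have "\<dots> \<le> 1 * 1 * (real n ^ 4 / real n powr z * w\<^sup>2)"
    using factor w nz by (intro mult_mono) auto
  finally show ?thesis by (simp add: power_mult_distrib q2)
qed

lemma exp_neg_split:
  fixes s W \<delta> dm :: real
  assumes s: "0 < s" and dm: "dm = \<delta> + 3 * W" and W: "0 \<le> W"
  shows "exp (- W / s) \<le> 1" and "exp (- dm / s) = exp (- \<delta> / s) * exp (- W / s) ^ 3"
proof -
  show "exp (- W / s) \<le> 1" using s W by simp
  have "- dm / s = - \<delta> / s + real 3 * (- W / s)" using s unfolding dm by (simp add: field_simps)
  then show "exp (- dm / s) = exp (- \<delta> / s) * exp (- W / s) ^ 3"
    by (simp only: exp_add exp_of_nat_mult)
qed

lemma bandwidth_factor_gt_1:
  fixes k n :: nat and z :: real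
  assumes "1 \<le> k" "1 \<le> n" "0 \<le> z"
  shows "1 < 13 ^ 8 * real k ^ 9 * real n powr z"
proof -
  have "1 * 1 \<le> real k ^ 9 * real n powr z"
    using assms by (intro mult_mono) (auto simp: ge_one_powr_ge_zero)
  then show ?thesis by simp
qed

theorem lemma15:
  fixes x :: "nat \<Rightarrow> real ^ 'd"
    and C :: "nat \<Rightarrow> (real ^ 'd) set"
    and \<delta>l :: "nat \<Rightarrow> real"
    and n k :: nat and \<alpha> \<sigma> \<delta> z :: real
    and U :: "nat \<Rightarrow> nat \<Rightarrow> real" and lam :: "nat \<Rightarrow> real"
  assumes alpha_pos: "\<alpha> > 0"
    and distinct_pts: "inj_on x {..<n}"
    and k_pos: "k \<ge> 1"
    and part_sub: "\<forall>l<k. C l \<subseteq> x ` {..<n}"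
    and part_disj: "\<forall>l<k. \<forall>m<k. l \<noteq> m \<longrightarrow> C l \<inter> C m = {}"
    and part_cover: "(\<Union>l<k. C l) = x ` {..<n}"
    and card_ge2: "\<forall>l<k. card (C l) \<ge> 2"
    and conn: "\<forall>l<k. connected_at_distance (C l) (\<delta>l l)"
    and delta_def: "\<delta> = Min ((\<lambda>m. setdist (C m) (x ` {..<n} - C m) powr \<alpha>) ` {..<k})
                        - 3 * Max ((\<lambda>l. \<delta>l l powr \<alpha>) ` {..<k})"
    and delta_pos: "\<delta> > 0"
    and eig: "ordered_eigenbasis n (norm_laplacian \<alpha> \<sigma> x n) U lam"
    and z_ge: "z \<ge> 10"
    and sigma_pos: "\<sigma> > 0"
    and sigma_bound: "\<sigma> < \<delta> powr (1 / \<alpha>) * ln (13 ^ 8 * real k ^ 9 * real n powr z) powr (- 1 / \<alpha>)"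
  shows "\<forall>i<n. \<forall>j<n. \<forall>g<n. \<forall>h<n. \<forall>l<k. \<forall>m<k.
           x i \<in> C l \<and> x j \<in> C l \<and> x g \<in> C m \<and> x h \<notin> C m \<longrightarrow>
           emb_dist k (degree \<alpha> \<sigma> x n) U i j
             \<le> real n powr ((4 - z) / 2) * emb_dist k (degree \<alpha> \<sigma> x n) U g h"
proof -
  define s W dm where "s = \<sigma> powr \<alpha>" and "W = Max ((\<lambda>l. \<delta>l l powr \<alpha>) ` {..<k})"
    and "dm = Min ((\<lambda>m. setdist (C m) (x ` {..<n} - C m) powr \<alpha>) ` {..<k})"
  interpret clustered_eigenbasis n "affinity \<alpha> \<sigma> x" "degree \<alpha> \<sigma> x n" k
      "\<lambda>l. {i. i < n \<and> x i \<in> C l}" "exp (- W / s)" "exp (- dm / s)" U lam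
    unfolding s_def W_def dm_def
    using alpha_pos sigma_pos distinct_pts k_pos part_disj part_cover card_ge2 conn eig
    by (rule affinity_clustered_eigenbasis)
  have "\<delta>l 0 powr \<alpha> \<le> W" unfolding W_def using k_pos by (intro Max_ge) auto
  then have W: "0 \<le> W" by (meson order_trans powr_ge_zero)
  have dm: "dm = \<delta> + 3 * W" using delta_def unfolding dm_def W_def by simp
  have s: "0 < s" unfolding s_def using sigma_pos by simp
  have n: "1 \<le> n" using k_less_n by simp
  have "exp (- \<delta> / s) * (13 ^ 8 * real k ^ 9 * real n powr z) < 1"
    unfolding s_def using bandwidth_factor_gt_1[OF k_pos n] z_ge
    by (intro exp_bandwidth_bound[OF alpha_pos sigma_pos delta_pos _ sigma_bound]) auto
  note bandwidth = k_pos n z_ge w_pos exp_neg_split(1)[OF s dm W] exp_gt_zero this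
  note gap = bandwidth_gap_condition[OF bandwidth, folded exp_neg_split(2)[OF s dm W]]
  note separation = bandwidth_separation_condition[OF bandwidth, folded exp_neg_split(2)[OF s dm W]]
  have q: "real n powr ((4 - z) / 2) \<le> 1" using powr_mono[of "(4 - z) / 2" 0 "real n"] n z_ge by simp
  show ?thesis
  proof (intro allI impI)
    fix i j g h l m
    assume "i < n" "j < n" "g < n" "h < n" "l < k" "m < k"
      and "x i \<in> C l \<and> x j \<in> C l \<and> x g \<in> C m \<and> x h \<notin> C m"
    then show "emb_dist k (degree \<alpha> \<sigma> x n) U i j
        \<le> real n powr ((4 - z) / 2) * emb_dist k (degree \<alpha> \<sigma> x n) U g h"
      by (intro cluster_separation[OF gap separation _ q, of l _ _ m]) auto
  qed
qed

end
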